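(* Let $n$ be a positive integer. If $l_2(n)=2^{k+1}s+\frac{1-(-2)^k}{3}$ for some nonnegative integer $k$ and integer $s$, then $l_2(n+1)=3^{k+1}s+\frac{1-(-3)^k}{2}$.
   Context: For a positive integer $m$, the triangle $T_m$ is an array whose row $x$ ($x=1,2,\dots$) has $x$ entries, in columns $0,\dots,x-1$. Row $1$ is the single entry $1$. For $x>1$, row $x$ is obtained from row $x-1$ by rotating it cyclically left by $m$ positions (the entry in column $c$ of row $x-1$ moves to column $(c-m)\bmod(x-1)\in\{0,\dots,x-2\}$ of row $x$), then appending in column $x-1$ a new entry equal to $1$ plus the entry in column $0$ of row $x-1$. $T_m(x,c)$ denotes the entry in row $x$, column $c$. Define $l_m(1)=1$ and, for $n\ge2$, $l_m(n)=\min\{x>l_m(n-1): T_m(x,0)=1\}$. Here $m=2$ (in $T_2$ the value $1$ heads infinitely many rows, so $l_2(n)$ is defined for all $n$). *)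

theory Defs
  imports Main
begin

text \<open>Row x of the triangle T_m, as a list of length x (columns 0..x-1).
  List.rotate m moves the entry in column c to column (c - m) mod length.\<close>
fun trow :: "nat \<Rightarrow> nat \<Rightarrow> nat list" where
  "trow m 0 = []"
| "trow m (Suc 0) = [1]"
| "trow m (Suc (Suc x)) = rotate m (trow m (Suc x)) @ [Suc (hd (trow m (Suc x)))]"

definition T :: "nat \<Rightarrow> nat \<Rightarrow> nat \<Rightarrow> nat" where
  "T m x c = trow m x ! c"

text \<open>l m n for n >= 1; the value at n = 0 is irrelevant.\<close>
fun l :: "nat \<Rightarrow> nat \<Rightarrow> nat" where
  "l m 0 = 0"
| "l m (Suc 0) = 1"
| "l m (Suc (Suc n)) = (LEAST x. x > l m (Suc n) \<and> T m x 0 = 1)"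

end

theory Submission
  imports Defs "HOL-Computational_Algebra.Primes"
begin

text \<open>In every row of \<open>T\<^sub>m\<close> the entry 1 occurs in exactly one column \<open>col_one m x\<close>, and
  for \<open>m = 2\<close> each new row moves it two columns to the left, wrapping around modulo the row
  length; \<open>l 2\<close> lists the rows in which it reaches column 0. If the 1 sits in column \<open>e < 2\<close> of
  row \<open>r\<close>, it is next in a column \<open>e' < 2\<close> at the row \<open>r'\<close> with \<open>2r' + e' = 3r + e\<close>.
  Starting from a zero row \<open>x = 2\<^sup>k\<^sup>+\<^sup>1s + (1 - (-2)\<^sup>k)/3\<close> with \<open>k > 0\<close>, this gives the row
  \<open>(3x - 1)/2 = 2\<^sup>k\<^sup>-\<^sup>1u\<close>, \<open>u = 6s \<plusminus> 1\<close>, with the 1 in column 1; each further step multiplies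
  the row by \<open>3/2\<close> while it is even, and from the odd row \<open>3\<^sup>k\<^sup>-\<^sup>1u\<close> the 1 returns to column 0
  at row \<open>(3\<^sup>ku + 1)/2 = 3\<^sup>k\<^sup>+\<^sup>1s + (1 - (-3)\<^sup>k)/2\<close>.\<close>

fun col_one :: "nat \<Rightarrow> nat \<Rightarrow> nat" where
  "col_one m 0 = 0"
| "col_one m (Suc 0) = 0"
| "col_one m (Suc (Suc x)) = (col_one m (Suc x) + m * x) mod Suc x"

lemma col_one_Suc: "1 \<le> r \<Longrightarrow> col_one m (Suc r) = (col_one m r + m * (r - 1)) mod r"
  by (cases r) auto

lemma col_one_less: "1 \<le> r \<Longrightarrow> col_one m r < r"
  by (cases "(m, r)" rule: col_one.cases) (auto simp: less_SucI)

lemma length_trow [simp]: "length (trow m x) = x"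
  by (induction m x rule: trow.induct) simp_all

lemma trow_nonzero: "0 \<notin> set (trow m x)"
  by (induction m x rule: trow.induct) (simp_all add: set_rotate)

lemma add_mod_eq_iff:
  fixes c q x m :: nat
  assumes "c < Suc x" "q < Suc x"
  shows "(c + m) mod Suc x = q \<longleftrightarrow> c = (q + m * x) mod Suc x"
proof -
  have shift: "(a + m * x + m) mod Suc x = a" if "a < Suc x" for a
  proof -
    have "a + m * x + m = a + Suc x * m" by simp
    then show ?thesis using that by (metis mod_mult_self2 mod_less)
  qed
  show ?thesis
  proof
    assume "(c + m) mod Suc x = q"
    then have "(q + m * x) mod Suc x = (c + m + m * x) mod Suc x"
      by (metis mod_add_left_eq)
    then show "c = (q + m * x) mod Suc x"
      using shift[OF assms(1)] by (simp add: ac_simps)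
  next
    assume "c = (q + m * x) mod Suc x"
    then have "(c + m) mod Suc x = (q + m * x + m) mod Suc x"
      by (metis mod_add_left_eq)
    then show "(c + m) mod Suc x = q"
      using shift[OF assms(2)] by simp
  qed
qed

lemma trow_nth_eq_1_iff: "c < x \<Longrightarrow> trow m x ! c = 1 \<longleftrightarrow> c = col_one m x"
proof (induction m x arbitrary: c rule: trow.induct)
  case (3 m x)
  define r where "r = trow m (Suc x)"
  have row: "trow m (Suc (Suc x)) = rotate m r @ [Suc (hd r)]"
    by (simp add: r_def)
  have col_less: "col_one m (Suc x) < Suc x"
    using col_one_less by simp
  show ?case
  proof (cases "c < Suc x")
    case True
    then have "trow m (Suc (Suc x)) ! c = r ! ((c + m) mod Suc x)"
      by (simp add: row r_def nth_append nth_rotate add.commute)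
    then show ?thesis
      using "3.IH"[of "(c + m) mod Suc x"] add_mod_eq_iff[OF True col_less] by (simp add: r_def)
  next
    case False
    then have c: "c = Suc x" using "3.prems" by simp
    have "r \<noteq> []"
      by (metis r_def length_trow list.size(3) nat.distinct(1))
    then have "hd r \<noteq> 0"
      using trow_nonzero[of m "Suc x"] hd_in_set r_def by metis
    moreover have "col_one m (Suc (Suc x)) \<noteq> c"
      using c by (metis col_one.simps(3) mod_less_divisor zero_less_Suc less_irrefl)
    ultimately show ?thesis
      using c row by (simp add: nth_append r_def)
  qed
qed simp_all

lemma T_eq_1_iff: "1 \<le> x \<Longrightarrow> T m x 0 = 1 \<longleftrightarrow> col_one m x = 0"
  using trow_nth_eq_1_iff[of 0 x m] by (simp add: T_def)

lemma col_one_2_Suc_ge: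
  assumes "1 \<le> r" "2 \<le> col_one 2 r"
  shows "col_one 2 (Suc r) = col_one 2 r - 2"
proof -
  have "col_one 2 r + 2 * (r - 1) = (col_one 2 r - 2) + r * 2"
    using assms by simp
  then have "col_one 2 (Suc r) = (col_one 2 r - 2) mod r"
    using col_one_Suc[OF assms(1)] by simp
  then show ?thesis
    using col_one_less[OF assms(1), of 2] by (simp add: less_imp_diff_less)
qed

lemma col_one_2_Suc_lt:
  assumes "2 \<le> r" "col_one 2 r < 2"
  shows "col_one 2 (Suc r) = r - 2 + col_one 2 r"
proof -
  have "col_one 2 (Suc r) = (col_one 2 r + 2 * (r - 1)) mod r"
    using assms(1) col_one_Suc[of r 2] by simp
  also have "\<dots> = (r - 2 + col_one 2 r + r) mod r"
    using assms by (intro arg_cong[where f = "\<lambda>t. t mod r"]) simp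
  also have "\<dots> = r - 2 + col_one 2 r"
    using assms by (simp only: mod_add_self2) simp
  finally show ?thesis .
qed

lemma col_one_2_descent:
  assumes "1 \<le> r" "col_one 2 r = v + 2 * i" "j \<le> i"
  shows "col_one 2 (r + j) = v + 2 * (i - j)"
  using assms(3)
proof (induction j)
  case (Suc j)
  then have "col_one 2 (r + j) = v + 2 * (i - j)" by simp
  moreover have "2 \<le> v + 2 * (i - j)" using Suc.prems by simp
  ultimately show ?case
    using col_one_2_Suc_ge[of "r + j"] assms(1) Suc.prems by simp
qed (simp add: assms(2))

lemma col_one_2_next_hit:
  assumes "2 \<le> r" "col_one 2 r < 2"
  obtains r' where "r < r'" "col_one 2 r' < 2"
    "2 * r' + col_one 2 r' = 3 * r + col_one 2 r"
    "\<forall>y. r < y \<and> y < r' \<longrightarrow> 2 \<le> col_one 2 y"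
proof -
  define i where "i = (r - 2 + col_one 2 r) div 2"
  define e where "e = (r - 2 + col_one 2 r) mod 2"
  have split: "e + 2 * i = r - 2 + col_one 2 r"
    unfolding e_def i_def by simp
  then have start: "col_one 2 (Suc r) = e + 2 * i"
    using col_one_2_Suc_lt[OF assms] by simp
  have hit: "col_one 2 (Suc r + i) = e"
    using col_one_2_descent[OF _ start, of i] by simp
  have "2 \<le> col_one 2 y" if "r < y" "y < Suc r + i" for y
  proof -
    have "y = Suc r + (y - Suc r)" "y - Suc r < i"
      using that by simp_all
    then show ?thesis
      using col_one_2_descent[OF _ start, of "y - Suc r"] by simp
  qed
  moreover have "2 * (Suc r + i) + e = 3 * r + col_one 2 r"
    using assms(1) split by (simp add: algebra_simps)
  moreover have "e < 2"
    by (simp add: e_def)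
  ultimately show ?thesis
    using that[of "Suc r + i"] hit by simp
qed

definition next_zero :: "nat \<Rightarrow> nat \<Rightarrow> nat \<Rightarrow> bool" where
  "next_zero m a b \<longleftrightarrow> a < b \<and> col_one m b = 0 \<and> (\<forall>y. a < y \<and> y < b \<longrightarrow> col_one m y \<noteq> 0)"

lemma next_zero_unique: "next_zero m a b \<Longrightarrow> next_zero m a b' \<Longrightarrow> b = b'"
  unfolding next_zero_def by (metis linorder_neqE_nat)

lemma next_zeroI:
  assumes "a < b" "col_one m b = 0" "\<forall>y. a < y \<and> y < b \<longrightarrow> 2 \<le> col_one m y"
  shows "next_zero m a b"
  unfolding next_zero_def
proof (intro conjI allI impI)
  fix y
  assume "a < y \<and> y < b"
  then have "2 \<le> col_one m y"
    using assms(3) by blast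
  then show "col_one m y \<noteq> 0"
    by linarith
qed (use assms in auto)

lemma next_zero_skip:
  assumes "a < r" "col_one m r = 1" "\<forall>y. a < y \<and> y < r \<longrightarrow> 2 \<le> col_one m y" "next_zero m r b"
  shows "next_zero m a b"
  unfolding next_zero_def
proof (intro conjI allI impI)
  show "a < b" "col_one m b = 0"
    using assms unfolding next_zero_def by auto
  fix y
  assume y: "a < y \<and> y < b"
  consider "y < r" | "y = r" | "r < y"
    by linarith
  then show "col_one m y \<noteq> 0"
    by cases (use assms y in \<open>auto simp: next_zero_def\<close>)
qed

lemma next_zero_even:
  assumes "col_one 2 x = 0" "even x" "2 \<le> x"
  obtains b where "next_zero 2 x b" "2 * b = 3 * x"
proof -
  obtain r where r: "x < r" "col_one 2 r < 2" "2 * r + col_one 2 r = 3 * x"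
    "\<forall>y. x < y \<and> y < r \<longrightarrow> 2 \<le> col_one 2 y"
    using col_one_2_next_hit[of x] assms by auto
  have "col_one 2 r = 0"
    using r(2,3) assms(2) by presburger
  then show ?thesis
    using that[of r] r next_zeroI[OF r(1) _ r(4)] by simp
qed

lemma next_zero_after_ones:
  assumes "col_one 2 r = 1" "2 \<le> r" "int r = 2 ^ j * u" "odd u"
  shows "\<exists>b. next_zero 2 r b \<and> 2 * int b = 3 ^ (j + 1) * u + 1"
  using assms
proof (induction j arbitrary: r u)
  case 0
  then have "odd (int r)"
    by simp
  then have "odd r"
    by simp
  have "col_one 2 r < 2"
    using "0.prems"(1) by simp
  then obtain r' where r': "r < r'" "col_one 2 r' < 2" "2 * r' + col_one 2 r' = 3 * r + 1"
    "\<forall>y. r < y \<and> y < r' \<longrightarrow> 2 \<le> col_one 2 y"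
    using col_one_2_next_hit[OF "0.prems"(2)] "0.prems"(1) by metis
  have "col_one 2 r' = 0"
    using r'(2,3) \<open>odd r\<close> by presburger
  moreover have "2 * int r' = 3 * u + 1"
    using r'(3) \<open>col_one 2 r' = 0\<close> "0.prems"(3) by simp
  ultimately show ?case
    using next_zeroI[OF r'(1) _ r'(4)] by (intro exI[of _ r']) simp
next
  case (Suc j)
  have "col_one 2 r < 2"
    using Suc.prems(1) by simp
  then obtain r' where r': "r < r'" "col_one 2 r' < 2" "2 * r' + col_one 2 r' = 3 * r + 1"
    "\<forall>y. r < y \<and> y < r' \<longrightarrow> 2 \<le> col_one 2 y"
    using col_one_2_next_hit[OF Suc.prems(2)] Suc.prems(1) by metis
  have "even (int r)"
    using Suc.prems(3) by simp
  then have "even r"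
    by simp
  then have one: "col_one 2 r' = 1"
    using r'(2,3) by presburger
  then have "int r' = 2 ^ j * (3 * u)"
    using r'(3) Suc.prems(3) by simp
  then obtain b where b: "next_zero 2 r' b" "2 * int b = 3 ^ (j + 1) * (3 * u) + 1"
    using Suc.IH[of r' "3 * u"] one r'(1) Suc.prems(2,4) by auto
  have "next_zero 2 r b"
    using next_zero_skip[OF r'(1) one r'(4) b(1)] .
  moreover have "2 * int b = 3 ^ (Suc j + 1) * u + 1"
    using b(2) by simp
  ultimately show ?case
    by blast
qed

lemma next_zero_odd:
  assumes "col_one 2 x = 0" "odd x" "3 * int x = 2 ^ (j + 1) * u + 1" "odd u"
  obtains b where "next_zero 2 x b" "2 * int b = 3 ^ (j + 1) * u + 1"
proof (cases "x = 1")
  case True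
  then have eq: "2 ^ j * u = 1"
    using assms(3) by simp
  then have "odd ((2::int) ^ j * u)"
    by simp
  then have "j = 0"
    by simp
  moreover have "u = 1"
    using eq calculation by simp
  moreover have "next_zero 2 1 2"
    by (simp add: next_zero_def numeral_2_eq_2)
  ultimately show ?thesis
    using that[of 2] True by simp
next
  case False
  then have "3 \<le> x"
    using assms(2) by presburger
  then obtain r where r: "x < r" "col_one 2 r < 2" "2 * r + col_one 2 r = 3 * x"
    "\<forall>y. x < y \<and> y < r \<longrightarrow> 2 \<le> col_one 2 y"
    using col_one_2_next_hit[of x] assms(1) by auto
  have one: "col_one 2 r = 1"
    using r(2,3) assms(2) by presburger
  then have "int r = 2 ^ j * u"
    using r(3) assms(3) by simp
  then obtain b where "next_zero 2 r b" "2 * int b = 3 ^ (j + 1) * u + 1"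
    using next_zero_after_ones[of r j u] one r(1) \<open>3 \<le> x\<close> assms(4) by auto
  then show ?thesis
    using that next_zero_skip[OF r(1) one r(4)] by blast
qed

lemma next_zero_exists:
  assumes "1 \<le> x" "col_one 2 x = 0"
  shows "\<exists>b. next_zero 2 x b"
proof (cases "even x")
  case True
  then have "2 \<le> x"
    using assms(1) by presburger
  then show ?thesis
    using next_zero_even[OF assms(2) True] by metis
next
  case False
  then obtain k where k: "x = 2 * k + 1"
    by (rule oddE)
  obtain j u where u: "odd u" "3 * k + 1 = u * 2 ^ j"
    using prime_power_canonical[OF two_is_prime_nat, of "3 * k + 1"] by auto
  have "3 * x = 2 * (3 * k + 1) + 1"
    using k by simp
  also have "\<dots> = 2 ^ (j + 1) * u + 1"
    using u(2) by (simp add: ac_simps)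
  finally have "int (3 * x) = int (2 ^ (j + 1) * u + 1)"
    by (simp only:)
  then have "3 * int x = 2 ^ (j + 1) * int u + 1" "odd (int u)"
    using u(1) by simp_all
  then show ?thesis
    using next_zero_odd[OF assms(2) False] by metis
qed

lemma Least_next_zero:
  assumes "1 \<le> a" "next_zero m a b"
  shows "(LEAST x. a < x \<and> T m x 0 = 1) = b"
proof (rule Least_equality)
  show "a < b \<and> T m b 0 = 1"
    using assms T_eq_1_iff[of b m] unfolding next_zero_def by auto
next
  fix y
  assume y: "a < y \<and> T m y 0 = 1"
  then have "col_one m y = 0"
    using assms(1) T_eq_1_iff[of y m] by simp
  then show "b \<le> y"
    using y assms(2) unfolding next_zero_def by (meson leI)
qed

lemma l_2_next_zero:
  "1 \<le> n \<Longrightarrow> 1 \<le> l 2 n \<and> col_one 2 (l 2 n) = 0 \<and> next_zero 2 (l 2 n) (l 2 (Suc n))"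
proof (induction n rule: nat_induct_at_least)
  case base
  obtain b where b: "next_zero 2 1 b"
    using next_zero_exists[of 1] by auto
  then have "l 2 (Suc (Suc 0)) = b"
    using Least_next_zero[OF _ b] by simp
  then show ?case
    using b by simp
next
  case (Suc n)
  then have zero: "1 \<le> l 2 (Suc n)" "col_one 2 (l 2 (Suc n)) = 0"
    unfolding next_zero_def by auto
  then obtain b where b: "next_zero 2 (l 2 (Suc n)) b"
    using next_zero_exists by blast
  then have "l 2 (Suc (Suc n)) = b"
    using Least_next_zero[OF zero(1) b] by simp
  then show ?case
    using zero b by simp
qed

lemma next_zero_closed_form:
  fixes s :: int
  assumes "1 \<le> x" "col_one 2 x = 0" "int x = 2 ^ (k + 1) * s + (1 - (-2) ^ k) div 3"
  shows "\<exists>b. next_zero 2 x b \<and> int b = 3 ^ (k + 1) * s + (1 - (-3) ^ k) div 2"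
proof (cases k)
  case 0
  then have x: "int x = 2 * s"
    using assms(3) by simp
  then have "even (int x)"
    by simp
  then have "even x"
    by simp
  moreover from this have "2 \<le> x"
    using assms(1) by presburger
  ultimately obtain b where "next_zero 2 x b" "2 * b = 3 * x"
    using next_zero_even[OF assms(2)] by blast
  moreover have "int b = 3 * s"
    using calculation(2) x by linarith
  ultimately show ?thesis
    using 0 by auto
next
  case (Suc j)
  have "1 mod 3 = (-2::int) ^ k mod 3"
    using power_mod[of "-2::int" 3 k] by simp
  then have "3 dvd 1 - (-2::int) ^ k"
    using mod_eq_dvd_iff by blast
  then have "3 * int x = 2 ^ (k + 1) * 3 * s + 1 - (-2) ^ k"
    using assms(3) by (simp add: algebra_simps)
  also have "\<dots> = 2 ^ (j + 1) * (6 * s + (-1) ^ j) + 1"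
    using Suc by (simp add: power_minus[of 2] algebra_simps)
  finally have x: "3 * int x = 2 ^ (j + 1) * (6 * s + (-1) ^ j) + 1" .
  then have "odd (3 * int x)"
    by simp
  then have "odd x"
    by simp
  then obtain b where b: "next_zero 2 x b" "2 * int b = 3 ^ (j + 1) * (6 * s + (-1) ^ j) + 1"
    using next_zero_odd[OF assms(2) _ x] by auto
  have "2 * int b = 2 * (3 ^ (k + 1) * s) + (1 - (-3) ^ k)"
    using b(2) Suc by (simp add: power_minus[of 3] algebra_simps)
  then have "int b = 3 ^ (k + 1) * s + (1 - (-3) ^ k) div 2"
    by simp
  then show ?thesis
    using b(1) by blast
qed

theorem mainTheorem18:
  fixes n k :: nat and s :: int
  assumes "n \<ge> 1"
    and "int (l 2 n) = 2 ^ (k + 1) * s + (1 - (-2) ^ k) div 3"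
  shows "int (l 2 (n + 1)) = 3 ^ (k + 1) * s + (1 - (-3) ^ k) div 2"
proof -
  have l: "1 \<le> l 2 n" "col_one 2 (l 2 n) = 0" "next_zero 2 (l 2 n) (l 2 (Suc n))"
    using l_2_next_zero[OF assms(1)] by auto
  obtain b where "next_zero 2 (l 2 n) b" "int b = 3 ^ (k + 1) * s + (1 - (-3) ^ k) div 2"
    using next_zero_closed_form[OF l(1,2) assms(2)] by blast
  then show ?thesis
    using next_zero_unique[OF l(3)] by simp
qed

end
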